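(* Let $n,p$ be positive integers, $X\in\mathbb{R}^{n\times p}$, $\mathbf y\in\mathbb{R}^n$ and $\delta>0$. For any $\mathbf s\in\{0,1\}^p$, the least squares estimate $\widehat{\boldsymbol\beta}_{[\mathbf s]}=(X_{[\mathbf s]}^\top X_{[\mathbf s]})^{-1}X_{[\mathbf s]}^\top\mathbf y$ exists (i.e. $X_{[\mathbf s]}^\top X_{[\mathbf s]}$ is invertible) if and only if $L_{\mathbf s}$ is invertible, and in that case \[ X_{[\mathbf s]}\widehat{\boldsymbol\beta}_{[\mathbf s]}=X_{\mathbf s}\widetilde{\boldsymbol\beta}_{\mathbf s}. \]
   Context: For a binary vector $\mathbf s\in\{0,1\}^p$, $|\mathbf s|=\sum_j s_j$ and $X_{[\mathbf s]}$ is the $n\times|\mathbf s|$ matrix obtained from $X$ by keeping only the columns $j$ with $s_j=1$. For $\mathbf t\in[0,1]^p$, $T_{\mathbf t}=\mathrm{Diag}(t_1,\dots,t_p)$, $X_{\mathbf t}=XT_{\mathbf t}$, $L_{\mathbf t}=\frac1n[X_{\mathbf t}^\top X_{\mathbf t}+\delta(I-T_{\mathbf t}^2)]$ with $I$ the $p\times p$ identity, and $\widetilde{\boldsymbol\beta}_{\mathbf t}:=L_{\mathbf t}^{+}\left(X_{\mathbf t}^\top\mathbf y/n\right)$ with $L_{\mathbf t}^+$ the Moore–Penrose pseudo-inverse. *)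

theory Defs
  imports "Jordan_Normal_Form.Matrix" "Jordan_Normal_Form.DL_Submatrix"
begin

definition Tmat :: "real vec \<Rightarrow> real mat" where
  "Tmat t = mat (dim_vec t) (dim_vec t) (\<lambda>(i,j). if i = j then t $ i else 0)"

definition Xt :: "real mat \<Rightarrow> real vec \<Rightarrow> real mat" where
  "Xt X t = X * Tmat t"

definition Lmat :: "real mat \<Rightarrow> real \<Rightarrow> real vec \<Rightarrow> real mat" where
  "Lmat X \<delta> t = (1 / real (dim_row X)) \<cdot>\<^sub>m
     ((Xt X t)\<^sup>T * Xt X t + \<delta> \<cdot>\<^sub>m (1\<^sub>m (dim_vec t) - Tmat t * Tmat t))"

definition pinv :: "real mat \<Rightarrow> real mat" where
  "pinv A = (THE B. B \<in> carrier_mat (dim_col A) (dim_row A) \<and>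
                    A * B * A = A \<and> B * A * B = B \<and>
                    (A * B)\<^sup>T = A * B \<and> (B * A)\<^sup>T = B * A)"

definition inv_mat :: "real mat \<Rightarrow> real mat" where
  "inv_mat A = (THE B. B \<in> carrier_mat (dim_row A) (dim_row A) \<and>
                       inverts_mat A B \<and> inverts_mat B A)"

definition beta_tilde :: "real mat \<Rightarrow> real vec \<Rightarrow> real \<Rightarrow> real vec \<Rightarrow> real vec" where
  "beta_tilde X y \<delta> t = pinv (Lmat X \<delta> t) *\<^sub>v
     ((1 / real (dim_row X)) \<cdot>\<^sub>v ((Xt X t)\<^sup>T *\<^sub>v y))"

definition Xsub :: "real mat \<Rightarrow> real vec \<Rightarrow> real mat" where
  "Xsub X s = submatrix X UNIV {j. j < dim_vec s \<and> s $ j = 1}"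

definition beta_hat :: "real mat \<Rightarrow> real vec \<Rightarrow> real vec \<Rightarrow> real vec" where
  "beta_hat X y s = inv_mat ((Xsub X s)\<^sup>T * Xsub X s) *\<^sub>v ((Xsub X s)\<^sup>T *\<^sub>v y)"

end

theory Submission
  imports Defs "Jordan_Normal_Form.Determinant"
begin

(* Let E be the p x k matrix whose columns are the unit vectors e_j with s_j = 1. Then
   X_[s] = X E, T_s = T_s^2 = E E^T and X_s = X_[s] E^T, so that
     n L_s = E (X_[s]^T X_[s]) E^T + delta (I - E E^T).
   Since E^T E = I, the right-hand side is block diagonal diag(X_[s]^T X_[s], delta I) with respect
   to the splitting into ran E and its orthogonal complement. Hence it is invertible iff
   X_[s]^T X_[s] is, with inverse E (X_[s]^T X_[s])^-1 E^T + delta^-1 (I - E E^T); the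
   pseudo-inverse of L_s is this inverse, and sandwiching it between X_s and X_s^T gives
   X_[s] (X_[s]^T X_[s])^-1 X_[s]^T. *)

text \<open>Variants of carrier-based library rules whose side conditions the simplifier can discharge.\<close>

lemma assoc_mult_mat_dim:
  "dim_col A = dim_row B \<Longrightarrow> dim_col B = dim_row C
   \<Longrightarrow> A * B * C = A * (B * (C :: 'a :: semiring_0 mat))"
  by (rule assoc_mult_mat[of A "dim_row A" "dim_col A" B "dim_col B" C "dim_col C"]) auto

lemma add_mult_distrib_mat_dim:
  "dim_row A = dim_row B \<Longrightarrow> dim_col A = dim_col B \<Longrightarrow> dim_col A = dim_row C
   \<Longrightarrow> (A + B) * C = A * C + B * (C :: 'a :: semiring_0 mat)"
  by (rule add_mult_distrib_mat[of A "dim_row A" "dim_col A" B C "dim_col C"]) auto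

lemma mult_add_distrib_mat_dim:
  "dim_row B = dim_row C \<Longrightarrow> dim_col B = dim_col C \<Longrightarrow> dim_col A = dim_row B
   \<Longrightarrow> A * (B + C) = A * B + A * (C :: 'a :: semiring_0 mat)"
  by (rule mult_add_distrib_mat[of A "dim_row A" "dim_col A" B "dim_col B" C]) auto

lemma mult_smult_assoc_mat_dim:
  "dim_col A = dim_row B \<Longrightarrow> (c \<cdot>\<^sub>m A) * B = (c :: 'a :: comm_semiring_0) \<cdot>\<^sub>m (A * B)"
  by (rule mult_smult_assoc_mat[of A "dim_row A" "dim_col A" B "dim_col B"]) auto

lemma mult_smult_distrib_dim:
  "dim_col A = dim_row B \<Longrightarrow> A * (c \<cdot>\<^sub>m B) = (c :: 'a :: comm_semiring_0) \<cdot>\<^sub>m (A * B)"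
  by (rule mult_smult_distrib[of A "dim_row A" "dim_col A" B "dim_col B"]) auto

lemma assoc_mult_mat_vec_dim:
  "dim_col A = dim_row B \<Longrightarrow> dim_vec v = dim_col B
   \<Longrightarrow> (A * B) *\<^sub>v v = A *\<^sub>v (B *\<^sub>v (v :: 'a :: semiring_0 vec))"
  by (rule assoc_mult_mat_vec[of A "dim_row A" "dim_col A" B "dim_col B"]) (auto intro: carrier_vecI)

lemma mult_mat_vec_smult_dim:
  "dim_vec v = dim_col A \<Longrightarrow> A *\<^sub>v (c \<cdot>\<^sub>v v) = (c :: 'a :: field) \<cdot>\<^sub>v (A *\<^sub>v v)"
  by (rule mult_mat_vec[of A "dim_row A" "dim_col A"]) (auto intro: carrier_vecI)

lemma minus_zero_mat [simp]: "(A :: 'a :: group_add mat) \<in> carrier_mat nr nc \<Longrightarrow> A - 0\<^sub>m nr nc = A"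
  by (intro eq_matI) auto

lemma smult_smult_mat: "a \<cdot>\<^sub>m (b \<cdot>\<^sub>m A) = (a * b :: 'a :: semigroup_mult) \<cdot>\<^sub>m A"
  by (intro eq_matI) (auto simp: mult.assoc)

lemma smult_mat_mult_vec:
  "dim_vec v = dim_col A \<Longrightarrow> (c \<cdot>\<^sub>m A) *\<^sub>v v = (c :: 'a :: comm_semiring_0) \<cdot>\<^sub>v (A *\<^sub>v v)"
  by (intro eq_vecI) (auto simp: scalar_prod_def sum_distrib_left mult.assoc)

lemma one_smult_mat [simp]: "(1 :: 'a :: monoid_mult) \<cdot>\<^sub>m A = A"
  by (intro eq_matI) auto

lemma invertible_mat_iff_right_inverse:
  fixes A :: "'a :: field mat"
  assumes A: "A \<in> carrier_mat n n"
  shows "invertible_mat A \<longleftrightarrow> (\<exists>B \<in> carrier_mat n n. A * B = 1\<^sub>m n)"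
proof
  assume "invertible_mat A"
  then obtain B where AB: "A * B = 1\<^sub>m n" and BA: "B * A = 1\<^sub>m (dim_row B)"
    using A unfolding invertible_mat_def inverts_mat_def by auto
  from AB have "dim_col B = n" by (metis index_mult_mat(3) index_one_mat(3))
  moreover from BA A have "dim_row B = n" by (metis index_mult_mat(3) index_one_mat(3) carrier_matD(2))
  ultimately show "\<exists>B \<in> carrier_mat n n. A * B = 1\<^sub>m n" using AB by blast
next
  assume "\<exists>B \<in> carrier_mat n n. A * B = 1\<^sub>m n"
  then obtain B where B: "B \<in> carrier_mat n n" and AB: "A * B = 1\<^sub>m n" by blast
  with mat_mult_left_right_inverse[OF A B AB] show "invertible_mat A"
    using A unfolding invertible_mat_def inverts_mat_def by auto
qed

lemma invertible_smult_mat_iff: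
  fixes A :: "'a :: field mat"
  assumes A: "A \<in> carrier_mat n n" and c: "c \<noteq> 0"
  shows "invertible_mat (c \<cdot>\<^sub>m A) \<longleftrightarrow> invertible_mat A"
proof -
  have "(c \<cdot>\<^sub>m A) * B = A * (c \<cdot>\<^sub>m B)" if "B \<in> carrier_mat n n" for B
    using A that by (simp add: mult_smult_assoc_mat_dim mult_smult_distrib_dim)
  moreover have "c \<cdot>\<^sub>m ((1 / c) \<cdot>\<^sub>m B) = B" for B :: "'a mat"
    using c by (intro eq_matI) auto
  ultimately show ?thesis
    unfolding invertible_mat_iff_right_inverse[OF A]
      invertible_mat_iff_right_inverse[OF smult_carrier_mat[OF A]]
    by (metis smult_carrier_mat)
qed

lemma inv_mat_eqI:
  assumes A: "A \<in> carrier_mat n n" and B: "B \<in> carrier_mat n n" and AB: "A * B = 1\<^sub>m n"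
  shows "inv_mat A = B"
  unfolding inv_mat_def
proof (rule the_equality)
  have "B * A = 1\<^sub>m n" by (rule mat_mult_left_right_inverse[OF A B AB])
  then show "B \<in> carrier_mat (dim_row A) (dim_row A) \<and> inverts_mat A B \<and> inverts_mat B A"
    using A B AB by (simp add: inverts_mat_def)
  fix C assume "C \<in> carrier_mat (dim_row A) (dim_row A) \<and> inverts_mat A C \<and> inverts_mat C A"
  then have C: "C \<in> carrier_mat n n" and CA: "C * A = 1\<^sub>m n"
    using A by (auto simp: inverts_mat_def)
  have "C = C * (A * B)" using C AB by simp
  also have "\<dots> = B" using A B C CA by (simp flip: assoc_mult_mat)
  finally show "C = B" .
qed

lemma pinv_eqI:
  assumes A: "A \<in> carrier_mat n n" and B: "B \<in> carrier_mat n n" and AB: "A * B = 1\<^sub>m n"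
  shows "pinv A = B"
  unfolding pinv_def
proof (rule the_equality)
  have BA: "B * A = 1\<^sub>m n" by (rule mat_mult_left_right_inverse[OF A B AB])
  then show "B \<in> carrier_mat (dim_col A) (dim_row A) \<and> A * B * A = A \<and> B * A * B = B \<and>
      (A * B)\<^sup>T = A * B \<and> (B * A)\<^sup>T = B * A"
    using A B AB by simp
  fix C assume "C \<in> carrier_mat (dim_col A) (dim_row A) \<and> A * C * A = A \<and> C * A * C = C \<and>
      (A * C)\<^sup>T = A * C \<and> (C * A)\<^sup>T = C * A"
  then have C: "C \<in> carrier_mat n n" and ACA: "A * C * A = A" using A by auto
  have "B = B * (A * C * A) * B" using ACA B BA by simp
  also have "\<dots> = (B * A) * C * (A * B)" using A B C by (simp add: assoc_mult_mat_dim)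
  also have "\<dots> = C" using AB BA C by simp
  finally show "C = B" by simp
qed

section \<open>Selection matrices\<close>

lemma bij_betw_pick:
  assumes "finite S"
  shows "bij_betw (pick S) {..<card S} S"
proof -
  have inj: "inj_on (pick S) {..<card S}"
    by (intro inj_onI) (metis lessThan_iff nat_neq_iff pick_mono_le)
  have "pick S ` {..<card S} \<subseteq> S" using pick_in_set_le by auto
  moreover have "card (pick S ` {..<card S}) = card S" using card_image[OF inj] by simp
  ultimately have "pick S ` {..<card S} = S" using card_subset_eq[OF assms] by blast
  with inj show ?thesis unfolding bij_betw_def by blast
qed

text \<open>Column \<open>a\<close> is the unit vector at \<open>pick S a\<close>, the \<open>a\<close>-th smallest element of \<open>S\<close>
  counting from 0.\<close>

definition selection_mat :: "nat \<Rightarrow> nat set \<Rightarrow> 'a :: zero_neq_one mat" where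
  "selection_mat p S = mat p (card S) (\<lambda>(i, a). if i = pick S a then 1 else 0)"

lemma dim_selection_mat [simp]:
  "dim_row (selection_mat p S) = p" "dim_col (selection_mat p S) = card S"
  by (simp_all add: selection_mat_def)

lemma selection_mat_carrier [simp]: "selection_mat p S \<in> carrier_mat p (card S)"
  by (simp add: carrier_matI)

lemma selection_mat_index [simp]:
  "i < p \<Longrightarrow> a < card S \<Longrightarrow> selection_mat p S $$ (i, a) = (if i = pick S a then 1 else 0)"
  by (simp add: selection_mat_def)

lemma transpose_selection_mat_mult:
  assumes S: "S \<subseteq> {..<p}"
  shows "(selection_mat p S)\<^sup>T * selection_mat p S = (1\<^sub>m (card S) :: 'a :: semiring_1 mat)"
proof (rule eq_matI)
  let ?E = "selection_mat p S :: 'a mat"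
  fix a b assume "a < dim_row (1\<^sub>m (card S) :: 'a mat)" "b < dim_col (1\<^sub>m (card S) :: 'a mat)"
  then have a: "a < card S" and b: "b < card S" by auto
  have pick_a: "pick S a < p" using pick_in_set_le[OF a] S by auto
  have "(?E\<^sup>T * ?E) $$ (a, b) = (\<Sum>i = 0..<p. ?E $$ (i, a) * ?E $$ (i, b))"
    using a b by (simp add: scalar_prod_def)
  also have "\<dots> = (\<Sum>i = 0..<p. if i = pick S a then ?E $$ (i, b) else 0)"
    using a by (intro sum.cong) auto
  also have "\<dots> = (if pick S a = pick S b then 1 else 0)" using pick_a b by simp
  also have "\<dots> = 1\<^sub>m (card S) $$ (a, b)"
    using a b bij_betw_pick[OF finite_subset[OF S finite_lessThan]]
    by (auto simp: bij_betw_def inj_on_def)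
  finally show "(?E\<^sup>T * ?E) $$ (a, b) = 1\<^sub>m (card S) $$ (a, b)" .
qed auto

lemma selection_mat_mult_transpose:
  assumes S: "S \<subseteq> {..<p}"
  shows "selection_mat p S * (selection_mat p S)\<^sup>T =
    (mat p p (\<lambda>(i, j). if i = j \<and> i \<in> S then 1 else 0) :: 'a :: semiring_1 mat)"
proof (rule eq_matI)
  let ?E = "selection_mat p S :: 'a mat"
  fix i j assume "i < dim_row (mat p p (\<lambda>(i, j). if i = j \<and> i \<in> S then 1 else 0) :: 'a mat)"
    "j < dim_col (mat p p (\<lambda>(i, j). if i = j \<and> i \<in> S then 1 else 0) :: 'a mat)"
  then have i: "i < p" and j: "j < p" by auto
  have fin: "finite S" using S finite_subset by blast
  let ?f = "\<lambda>x. if i = x \<and> j = x then 1 else (0 :: 'a)"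
  have "(?E * ?E\<^sup>T) $$ (i, j) = (\<Sum>a = 0..<card S. ?E $$ (i, a) * ?E $$ (j, a))"
    using i j by (simp add: scalar_prod_def)
  also have "\<dots> = (\<Sum>a\<in>{..<card S}. ?f (pick S a))"
    using i j by (intro sum.cong) auto
  also have "\<dots> = (\<Sum>x\<in>S. ?f x)"
    by (rule sum.reindex_bij_betw[OF bij_betw_pick[OF fin]])
  also have "\<dots> = (if i = j \<and> i \<in> S then 1 else 0)"
    using fin by (cases "i = j") (auto intro!: sum.neutral)
  finally show "(?E * ?E\<^sup>T) $$ (i, j) =
      mat p p (\<lambda>(i, j). if i = j \<and> i \<in> S then 1 else 0) $$ (i, j)"
    using i j by simp
qed auto

lemma mult_selection_mat:
  fixes A :: "'a :: semiring_1 mat"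
  assumes A: "A \<in> carrier_mat m p" and S: "S \<subseteq> {..<p}"
  shows "A * selection_mat p S = submatrix A UNIV S"
proof -
  have rows: "card {i. i < dim_row A \<and> i \<in> UNIV} = m"
    and cols: "card {j. j < dim_col A \<and> j \<in> S} = card S"
    using A S by (auto intro: arg_cong[where f = card])
  show ?thesis
  proof (rule eq_matI)
    fix r a assume "r < dim_row (submatrix A UNIV S)" "a < dim_col (submatrix A UNIV S)"
    then have r: "r < m" and a: "a < card S" using rows cols by (auto simp: dim_submatrix)
    have pick_a: "pick S a < p" using pick_in_set_le[OF a] S by auto
    have "(A * selection_mat p S) $$ (r, a) = (\<Sum>i = 0..<p. A $$ (r, i) * selection_mat p S $$ (i, a))"
      using A r a by (simp add: scalar_prod_def)
    also have "\<dots> = (\<Sum>i = 0..<p. if i = pick S a then A $$ (r, i) else 0)"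
      using a by (intro sum.cong) auto
    also have "\<dots> = submatrix A UNIV S $$ (r, a)"
      using pick_a r a rows cols by (simp add: submatrix_index pick_UNIV)
    finally show "(A * selection_mat p S) $$ (r, a) = submatrix A UNIV S $$ (r, a)" .
  qed (use A rows cols in \<open>auto simp: dim_submatrix\<close>)
qed

section \<open>Block-diagonal embeddings\<close>

definition block_embed :: "'a :: comm_ring_1 mat \<Rightarrow> 'a mat \<Rightarrow> 'a \<Rightarrow> 'a mat" where
  "block_embed E A d = E * A * E\<^sup>T + d \<cdot>\<^sub>m (1\<^sub>m (dim_row E) - E * E\<^sup>T)"

lemma dim_block_embed [simp]:
  "dim_row (block_embed E A d) = dim_row E" "dim_col (block_embed E A d) = dim_row E"
  by (simp_all add: block_embed_def)

context
  fixes p k :: nat and E :: "'a :: comm_ring_1 mat"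
  assumes E: "E \<in> carrier_mat p k" and isometry: "E\<^sup>T * E = 1\<^sub>m k"
begin

lemma compl_proj_carrier: "1\<^sub>m p - E * E\<^sup>T \<in> carrier_mat p p"
  using E by auto

lemma transpose_mult_compl_proj: "E\<^sup>T * (1\<^sub>m p - E * E\<^sup>T) = 0\<^sub>m k p"
proof -
  have "E\<^sup>T * (1\<^sub>m p - E * E\<^sup>T) = E\<^sup>T - E\<^sup>T * E * E\<^sup>T"
    using E by (simp add: mult_minus_distrib_mat[of "E\<^sup>T" k p "1\<^sub>m p" p]
        assoc_mult_mat[of "E\<^sup>T" k p E k "E\<^sup>T" p])
  then show ?thesis using E by (simp add: isometry)
qed

lemma compl_proj_mult: "(1\<^sub>m p - E * E\<^sup>T) * E = 0\<^sub>m p k"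
proof -
  have "(1\<^sub>m p - E * E\<^sup>T) * E = E - E * (E\<^sup>T * E)"
    using E by (simp add: minus_mult_distrib_mat[of _ p p] assoc_mult_mat[of E p k "E\<^sup>T" p E k])
  then show ?thesis using E by (simp add: isometry)
qed

lemma compl_proj_idem: "(1\<^sub>m p - E * E\<^sup>T) * (1\<^sub>m p - E * E\<^sup>T) = 1\<^sub>m p - E * E\<^sup>T"
proof -
  have EEt: "E * E\<^sup>T \<in> carrier_mat p p" using E by auto
  have "(1\<^sub>m p - E * E\<^sup>T) * (1\<^sub>m p - E * E\<^sup>T) =
      (1\<^sub>m p - E * E\<^sup>T) - E * (E\<^sup>T * (1\<^sub>m p - E * E\<^sup>T))"
    using E compl_proj_carrier
    by (simp add: minus_mult_distrib_mat[OF one_carrier_mat EEt compl_proj_carrier] assoc_mult_mat_dim)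
  then show ?thesis using E compl_proj_carrier by (simp add: transpose_mult_compl_proj)
qed

lemma block_embed_carrier: "A \<in> carrier_mat k k \<Longrightarrow> block_embed E A d \<in> carrier_mat p p"
  using E unfolding block_embed_def by auto

lemma transpose_mult_block_embed:
  assumes A: "A \<in> carrier_mat k k"
  shows "E\<^sup>T * block_embed E A d = A * E\<^sup>T"
proof -
  have "E\<^sup>T * block_embed E A d = (E\<^sup>T * E) * A * E\<^sup>T + d \<cdot>\<^sub>m (E\<^sup>T * (1\<^sub>m p - E * E\<^sup>T))"
    using E A unfolding block_embed_def
    by (simp add: mult_add_distrib_mat_dim mult_smult_distrib_dim assoc_mult_mat_dim)
  also have "\<dots> = A * E\<^sup>T"
    using E A by (simp add: isometry transpose_mult_compl_proj)
  finally show ?thesis .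
qed

lemma block_embed_mult_isometry:
  assumes A: "A \<in> carrier_mat k k"
  shows "block_embed E A d * E = E * A"
proof -
  have "block_embed E A d * E = E * A * (E\<^sup>T * E) + d \<cdot>\<^sub>m ((1\<^sub>m p - E * E\<^sup>T) * E)"
    using E A unfolding block_embed_def
    by (simp add: add_mult_distrib_mat_dim mult_smult_assoc_mat_dim assoc_mult_mat_dim)
  also have "\<dots> = E * A"
    using E A by (simp add: isometry compl_proj_mult)
  finally show ?thesis .
qed

lemma block_embed_mult_compl_proj:
  assumes A: "A \<in> carrier_mat k k"
  shows "block_embed E A d * (1\<^sub>m p - E * E\<^sup>T) = d \<cdot>\<^sub>m (1\<^sub>m p - E * E\<^sup>T)"
proof -
  have "block_embed E A d * (1\<^sub>m p - E * E\<^sup>T) = E * A * (E\<^sup>T * (1\<^sub>m p - E * E\<^sup>T))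
      + d \<cdot>\<^sub>m ((1\<^sub>m p - E * E\<^sup>T) * (1\<^sub>m p - E * E\<^sup>T))"
    using E A unfolding block_embed_def
    by (simp add: add_mult_distrib_mat_dim mult_smult_assoc_mat_dim assoc_mult_mat_dim)
  also have "\<dots> = d \<cdot>\<^sub>m (1\<^sub>m p - E * E\<^sup>T)"
    using E A compl_proj_carrier by (simp add: transpose_mult_compl_proj compl_proj_idem)
  finally show ?thesis .
qed

lemma block_embed_mult:
  assumes A: "A \<in> carrier_mat k k" and B: "B \<in> carrier_mat k k"
  shows "block_embed E A d * block_embed E B e = block_embed E (A * B) (d * e)"
proof -
  let ?K = "block_embed E A d" and ?Q = "1\<^sub>m p - E * E\<^sup>T"
  have K: "?K \<in> carrier_mat p p" using block_embed_carrier[OF A] .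
  have "?K * block_embed E B e = (?K * E) * B * E\<^sup>T + e \<cdot>\<^sub>m (?K * ?Q)"
    using K E B compl_proj_carrier unfolding block_embed_def[of E B]
    by (simp add: mult_add_distrib_mat_dim mult_smult_distrib_dim assoc_mult_mat_dim)
  also have "\<dots> = E * A * B * E\<^sup>T + e \<cdot>\<^sub>m (d \<cdot>\<^sub>m ?Q)"
    by (simp only: block_embed_mult_isometry[OF A] block_embed_mult_compl_proj[OF A])
  also have "\<dots> = block_embed E (A * B) (d * e)"
    using E A B unfolding block_embed_def by (simp add: assoc_mult_mat_dim smult_smult_mat mult.commute)
  finally show ?thesis .
qed

lemma block_embed_one: "block_embed E (1\<^sub>m k) 1 = 1\<^sub>m p"
  using E by (intro eq_matI) (auto simp: block_embed_def)

lemma transpose_mult_block_embed_mult: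
  assumes A: "A \<in> carrier_mat k k"
  shows "E\<^sup>T * block_embed E A d * E = A"
  using E A by (simp add: transpose_mult_block_embed assoc_mult_mat_dim isometry)

lemma mult_transpose_block_embed_mult:
  assumes F: "F \<in> carrier_mat n k" and B: "B \<in> carrier_mat k k"
  shows "(F * E\<^sup>T) * block_embed E B e * (F * E\<^sup>T)\<^sup>T = F * B * F\<^sup>T"
proof -
  have "(F * E\<^sup>T) * block_embed E B e * (F * E\<^sup>T)\<^sup>T = F * (E\<^sup>T * block_embed E B e * E) * F\<^sup>T"
    using F E B by (simp add: transpose_mult[OF F] assoc_mult_mat_dim)
  then show ?thesis using B by (simp add: transpose_mult_block_embed_mult)
qed

end

context
  fixes p k :: nat and E :: "'a :: field mat"
  assumes E: "E \<in> carrier_mat p k" and isometry: "E\<^sup>T * E = 1\<^sub>m k"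
begin

lemma invertible_block_embed_iff:
  assumes A: "A \<in> carrier_mat k k" and d: "d \<noteq> 0"
  shows "invertible_mat (block_embed E A d) \<longleftrightarrow> invertible_mat A"
proof
  assume "invertible_mat (block_embed E A d)"
  then obtain M where M: "M \<in> carrier_mat p p" and KM: "block_embed E A d * M = 1\<^sub>m p"
    using invertible_mat_iff_right_inverse[OF block_embed_carrier[OF E isometry A]] by blast
  have "A * (E\<^sup>T * M * E) = (E\<^sup>T * block_embed E A d) * M * E"
    using E A M by (simp add: transpose_mult_block_embed[OF E isometry A] assoc_mult_mat_dim)
  also have "\<dots> = E\<^sup>T * (block_embed E A d * M) * E"
    using E M by (simp add: assoc_mult_mat_dim)
  also have "\<dots> = 1\<^sub>m k" using E by (simp add: KM isometry)
  finally show "invertible_mat A"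
    using invertible_mat_iff_right_inverse[OF A] E M by (metis mult_carrier_mat transpose_carrier_mat)
next
  assume "invertible_mat A"
  then obtain B where B: "B \<in> carrier_mat k k" and AB: "A * B = 1\<^sub>m k"
    using invertible_mat_iff_right_inverse[OF A] by blast
  have "block_embed E A d * block_embed E B (1 / d) = 1\<^sub>m p"
    using d by (simp add: block_embed_mult[OF E isometry A B] AB block_embed_one[OF E isometry])
  then show "invertible_mat (block_embed E A d)"
    using invertible_mat_iff_right_inverse block_embed_carrier[OF E isometry] A B by blast
qed

end

section \<open>Least squares on a subset of columns\<close>

definition support_selection :: "real vec \<Rightarrow> real mat" where
  "support_selection s = selection_mat (dim_vec s) {j. j < dim_vec s \<and> s $ j = 1}"

context
  fixes n p :: nat and X :: "real mat" and s :: "real vec"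
  assumes X: "X \<in> carrier_mat n p" and s: "s \<in> carrier_vec p"
    and s01: "\<forall>j<p. s $ j = 0 \<or> s $ j = 1"
begin

lemma selected_indices_subset: "{j. j < dim_vec s \<and> s $ j = 1} \<subseteq> {..<p}"
  using s by auto

lemma support_selection_carrier:
  "support_selection s \<in> carrier_mat p (card {j. j < dim_vec s \<and> s $ j = 1})"
  using s by (simp add: support_selection_def)

lemma support_selection_isometry:
  "(support_selection s)\<^sup>T * support_selection s = 1\<^sub>m (card {j. j < dim_vec s \<and> s $ j = 1})"
  unfolding support_selection_def using transpose_selection_mat_mult selected_indices_subset s by auto

lemma Xsub_eq_mult_support_selection: "Xsub X s = X * support_selection s"
  using mult_selection_mat[OF X selected_indices_subset] s by (simp add: Xsub_def support_selection_def)

lemma Xsub_carrier: "Xsub X s \<in> carrier_mat n (card {j. j < dim_vec s \<and> s $ j = 1})"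
  using X support_selection_carrier by (simp add: Xsub_eq_mult_support_selection)

lemma Tmat_eq_support_selection: "Tmat s = support_selection s * (support_selection s)\<^sup>T"
proof -
  have "Tmat s = mat p p (\<lambda>(i, j). if i = j \<and> i \<in> {j. j < dim_vec s \<and> s $ j = 1} then 1 else 0)"
    using s s01 by (intro eq_matI) (auto simp: Tmat_def)
  then show ?thesis
    using selection_mat_mult_transpose[OF selected_indices_subset, where 'a = real] s by (simp add: support_selection_def)
qed

lemma Xt_eq_Xsub_mult_transpose: "Xt X s = Xsub X s * (support_selection s)\<^sup>T"
  using X support_selection_carrier
  by (simp add: Xt_def Tmat_eq_support_selection Xsub_eq_mult_support_selection assoc_mult_mat_dim)

lemma Lmat_eq_block_embed:
  "Lmat X \<delta> s = (1 / real n) \<cdot>\<^sub>m block_embed (support_selection s) ((Xsub X s)\<^sup>T * Xsub X s) \<delta>"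
proof -
  let ?E = "support_selection s" and ?Xs = "Xsub X s"
  have E: "?E \<in> carrier_mat p (card {j. j < dim_vec s \<and> s $ j = 1})" by (rule support_selection_carrier)
  have Xs: "?Xs \<in> carrier_mat n (card {j. j < dim_vec s \<and> s $ j = 1})" by (rule Xsub_carrier)
  have "(Xt X s)\<^sup>T * Xt X s = ?E * (?Xs\<^sup>T * ?Xs) * ?E\<^sup>T"
    using Xs E by (simp add: Xt_eq_Xsub_mult_transpose transpose_mult[OF Xs] assoc_mult_mat_dim)
  moreover have "Tmat s * Tmat s = ?E * ?E\<^sup>T"
  proof -
    have "Tmat s * Tmat s = ?E * (?E\<^sup>T * ?E) * ?E\<^sup>T"
      using E by (simp add: Tmat_eq_support_selection assoc_mult_mat_dim)
    then show ?thesis using E by (simp add: support_selection_isometry)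
  qed
  ultimately show ?thesis
    using X s E by (simp add: Lmat_def block_embed_def)
qed

lemma gram_carrier:
  "(Xsub X s)\<^sup>T * Xsub X s \<in> carrier_mat (card {j. j < dim_vec s \<and> s $ j = 1}) (card {j. j < dim_vec s \<and> s $ j = 1})"
  using Xsub_carrier by (metis mult_carrier_mat transpose_carrier_mat)

lemma invertible_gram_iff_invertible_Lmat:
  assumes n: "0 < n" and \<delta>: "\<delta> \<noteq> 0"
  shows "invertible_mat ((Xsub X s)\<^sup>T * Xsub X s) \<longleftrightarrow> invertible_mat (Lmat X \<delta> s)"
proof -
  let ?E = "support_selection s" and ?A = "(Xsub X s)\<^sup>T * Xsub X s"
  note E = support_selection_carrier support_selection_isometry
  have "invertible_mat (Lmat X \<delta> s) \<longleftrightarrow> invertible_mat (block_embed ?E ?A \<delta>)"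
    unfolding Lmat_eq_block_embed using n
    by (intro invertible_smult_mat_iff[OF block_embed_carrier[OF E gram_carrier]]) simp
  also have "\<dots> \<longleftrightarrow> invertible_mat ?A"
    by (rule invertible_block_embed_iff[OF E gram_carrier \<delta>])
  finally show ?thesis by (rule sym)
qed

lemma pinv_Lmat_eq:
  assumes n: "0 < n" and \<delta>: "\<delta> \<noteq> 0"
    and B: "B \<in> carrier_mat (card {j. j < dim_vec s \<and> s $ j = 1}) (card {j. j < dim_vec s \<and> s $ j = 1})"
    and AB: "(Xsub X s)\<^sup>T * Xsub X s * B = 1\<^sub>m (card {j. j < dim_vec s \<and> s $ j = 1})"
  shows "pinv (Lmat X \<delta> s) = real n \<cdot>\<^sub>m block_embed (support_selection s) B (1 / \<delta>)"
proof (rule pinv_eqI)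
  let ?E = "support_selection s" and ?A = "(Xsub X s)\<^sup>T * Xsub X s"
  note E = support_selection_carrier support_selection_isometry
  show "Lmat X \<delta> s \<in> carrier_mat p p"
    unfolding Lmat_eq_block_embed using block_embed_carrier[OF E gram_carrier] by simp
  show "real n \<cdot>\<^sub>m block_embed ?E B (1 / \<delta>) \<in> carrier_mat p p"
    using block_embed_carrier[OF E B] by simp
  have "Lmat X \<delta> s * (real n \<cdot>\<^sub>m block_embed ?E B (1 / \<delta>)) =
      ((1 / real n) * real n) \<cdot>\<^sub>m (block_embed ?E ?A \<delta> * block_embed ?E B (1 / \<delta>))"
    unfolding Lmat_eq_block_embed using support_selection_carrier
    by (simp add: mult_smult_assoc_mat_dim mult_smult_distrib_dim smult_smult_mat)
  also have "\<dots> = 1\<^sub>m p"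
    using n \<delta> by (simp add: block_embed_mult[OF E gram_carrier B] AB block_embed_one[OF E])
  finally show "Lmat X \<delta> s * (real n \<cdot>\<^sub>m block_embed ?E B (1 / \<delta>)) = 1\<^sub>m p" .
qed

lemma fitted_values_eq:
  assumes n: "0 < n" and \<delta>: "\<delta> \<noteq> 0" and y: "y \<in> carrier_vec n"
    and invertible: "invertible_mat ((Xsub X s)\<^sup>T * Xsub X s)"
  shows "Xsub X s *\<^sub>v beta_hat X y s = Xt X s *\<^sub>v beta_tilde X y \<delta> s"
proof -
  let ?k = "card {j. j < dim_vec s \<and> s $ j = 1}"
  let ?E = "support_selection s" and ?Xs = "Xsub X s"
  note E = support_selection_carrier support_selection_isometry
  obtain B where B: "B \<in> carrier_mat ?k ?k" and AB: "?Xs\<^sup>T * ?Xs * B = 1\<^sub>m ?k"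
    using invertible invertible_mat_iff_right_inverse[OF gram_carrier] by blast
  define M where "M = block_embed ?E B (1 / \<delta>)"
  have M: "M \<in> carrier_mat p p" unfolding M_def by (rule block_embed_carrier[OF E B])
  have Xt: "Xt X s \<in> carrier_mat n p"
    using Xsub_carrier support_selection_carrier by (simp add: Xt_eq_Xsub_mult_transpose)
  have "Xt X s *\<^sub>v beta_tilde X y \<delta> s =
      (Xt X s * (real n \<cdot>\<^sub>m M) * (Xt X s)\<^sup>T) *\<^sub>v ((1 / real n) \<cdot>\<^sub>v y)"
    unfolding beta_tilde_def pinv_Lmat_eq[OF n \<delta> B AB, folded M_def] using X Xt M y
    by (simp add: mult_mat_vec_smult_dim assoc_mult_mat_vec_dim)
  also have "\<dots> = (real n \<cdot>\<^sub>m (?Xs * B * ?Xs\<^sup>T)) *\<^sub>v ((1 / real n) \<cdot>\<^sub>v y)"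
    unfolding M_def Xt_eq_Xsub_mult_transpose using Xsub_carrier support_selection_carrier B
    by (simp add: mult_smult_assoc_mat_dim mult_smult_distrib_dim
        mult_transpose_block_embed_mult[OF E Xsub_carrier B])
  also have "\<dots> = ?Xs *\<^sub>v (B *\<^sub>v (?Xs\<^sup>T *\<^sub>v y))"
    using n Xsub_carrier B y
    by (simp add: smult_mat_mult_vec mult_mat_vec_smult_dim assoc_mult_mat_vec_dim smult_smult_assoc)
  also have "\<dots> = ?Xs *\<^sub>v beta_hat X y s"
    unfolding beta_hat_def inv_mat_eqI[OF gram_carrier B AB] ..
  finally show ?thesis by (rule sym)
qed

end

theorem theorem2:
  fixes n p :: nat and X :: "real mat" and y s :: "real vec" and \<delta> :: real
  assumes "0 < n" and "0 < p"
    and "X \<in> carrier_mat n p" and "y \<in> carrier_vec n" and "\<delta> > 0"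
    and "s \<in> carrier_vec p" and "\<forall>j<p. s $ j = 0 \<or> s $ j = 1"
  shows "(invertible_mat ((Xsub X s)\<^sup>T * Xsub X s) \<longleftrightarrow> invertible_mat (Lmat X \<delta> s))
    \<and> (invertible_mat ((Xsub X s)\<^sup>T * Xsub X s) \<longrightarrow>
         Xsub X s *\<^sub>v beta_hat X y s = Xt X s *\<^sub>v beta_tilde X y \<delta> s)"
proof -
  note setting = assms(3,6,7) and n = assms(1) and y = assms(4)
  have \<delta>: "\<delta> \<noteq> 0" using assms(5) by simp
  show ?thesis
    using invertible_gram_iff_invertible_Lmat[OF setting n \<delta>] fitted_values_eq[OF setting n \<delta> y]
    by blast
qed

end
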